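(* Let $R$ be a ring. (1) For each $S\in\mathrm{Den}_l(R)$, the poset $(\{S'\in\mathrm{Den}_l(R)\mid S\subseteq S'\},\subseteq)$ has a maximal element. (2) The set $\mathrm{maxDen}_l(R)$ of maximal elements of the poset $(\mathrm{Den}_l(R),\subseteq)$ is non-empty.
   Context: Rings are associative with $1$. A multiplicatively closed subset $S$ ($1\in S$, $0\notin S$, closed under products) is a left Ore set if $Sr\cap Rs\ne\emptyset$ for all $r\in R,s\in S$; it is a left denominator set if moreover $rs=0$ ($r\in R$, $s\in S$) implies $tr=0$ for some $t\in S$. $\mathrm{Den}_l(R)$ is the set of all left denominator sets of $R$. *)

theory Defs
  imports Main
begin

definition mult_closed :: "'a::ring_1 set \<Rightarrow> bool" where
  "mult_closed S \<longleftrightarrow> 1 \<in> S \<and> 0 \<notin> S \<and> (\<forall>s\<in>S. \<forall>t\<in>S. s * t \<in> S)"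

definition left_ore_set :: "'a::ring_1 set \<Rightarrow> bool" where
  "left_ore_set S \<longleftrightarrow> mult_closed S \<and>
     (\<forall>r. \<forall>s\<in>S. \<exists>s'\<in>S. \<exists>r'. s' * r = r' * s)"

definition left_denominator_set :: "'a::ring_1 set \<Rightarrow> bool" where
  "left_denominator_set S \<longleftrightarrow> left_ore_set S \<and>
     (\<forall>r. \<forall>s\<in>S. r * s = 0 \<longrightarrow> (\<exists>t\<in>S. t * r = 0))"

definition Den_l :: "'a::ring_1 set set" where
  "Den_l = {S. left_denominator_set S}"

definition maxDen_l :: "'a::ring_1 set set" where
  "maxDen_l = {S \<in> Den_l. \<forall>T\<in>Den_l. S \<subseteq> T \<longrightarrow> T = S}"

end

theory Submission
  imports Defs
begin

text \<open>Each defining condition of a left denominator set is either a closure condition on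
  finitely many elements of S or an existence statement inside S, so it survives unions of
  nonempty chains. Zorn's lemma then yields maximal elements above any S \<in> Den_l, and
  {1} \<in> Den_l shows that maximal ones exist at all.\<close>

lemma mult_closed_Union_chain:
  assumes "chain\<^sub>\<subseteq> C" "C \<noteq> {}" "\<And>A. A \<in> C \<Longrightarrow> mult_closed A"
  shows "mult_closed (\<Union>C)"
  unfolding mult_closed_def
proof (intro conjI ballI)
  show "1 \<in> \<Union>C" "0 \<notin> \<Union>C"
    using assms(2,3) by (auto simp: mult_closed_def)
next
  fix s t assume "s \<in> \<Union>C" "t \<in> \<Union>C"
  then obtain A B where "A \<in> C" "B \<in> C" "s \<in> A" "t \<in> B" by blast
  moreover have "A \<subseteq> B \<or> B \<subseteq> A"
    using \<open>A \<in> C\<close> \<open>B \<in> C\<close> assms(1) by (auto simp: chain_subset_def)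
  ultimately show "s * t \<in> \<Union>C"
    using assms(3) unfolding mult_closed_def by (metis UnionI subsetD)
qed

lemma left_ore_set_Union_chain:
  assumes "chain\<^sub>\<subseteq> C" "C \<noteq> {}" "\<And>A. A \<in> C \<Longrightarrow> left_ore_set A"
  shows "left_ore_set (\<Union>C)"
  unfolding left_ore_set_def
proof (intro conjI allI ballI)
  show "mult_closed (\<Union>C)"
    using assms by (intro mult_closed_Union_chain) (auto simp: left_ore_set_def)
next
  fix r s assume "s \<in> \<Union>C"
  then obtain A where "A \<in> C" "s \<in> A" by blast
  then obtain s' r' where "s' \<in> A" "s' * r = r' * s"
    using assms(3) unfolding left_ore_set_def by meson
  then show "\<exists>s'\<in>\<Union>C. \<exists>r'. s' * r = r' * s"
    using \<open>A \<in> C\<close> by blast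
qed

lemma left_denominator_set_Union_chain:
  assumes "chain\<^sub>\<subseteq> C" "C \<noteq> {}" "\<And>A. A \<in> C \<Longrightarrow> left_denominator_set A"
  shows "left_denominator_set (\<Union>C)"
  unfolding left_denominator_set_def
proof (intro conjI allI ballI impI)
  show "left_ore_set (\<Union>C)"
    using assms by (intro left_ore_set_Union_chain) (auto simp: left_denominator_set_def)
next
  fix r s assume "s \<in> \<Union>C" "r * s = 0"
  then obtain A where "A \<in> C" "s \<in> A" by blast
  then obtain t where "t \<in> A" "t * r = 0"
    using assms(3) \<open>r * s = 0\<close> unfolding left_denominator_set_def by meson
  then show "\<exists>t\<in>\<Union>C. t * r = 0"
    using \<open>A \<in> C\<close> by blast
qed

lemma Den_l_Union_chain:
  assumes "C \<in> chains Den_l" "C \<noteq> {}"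
  shows "\<Union>C \<in> Den_l"
  using assms left_denominator_set_Union_chain[of C]
  by (auto simp: chains_def Den_l_def)

lemma ex_maximal_Den_l_above:
  assumes "S \<in> Den_l"
  shows "\<exists>M \<in> {S' \<in> Den_l. S \<subseteq> S'}. \<forall>T \<in> {S' \<in> Den_l. S \<subseteq> S'}. M \<subseteq> T \<longrightarrow> T = M"
proof (rule Zorn_Lemma2, intro ballI)
  fix D assume D: "D \<in> chains {S' \<in> Den_l. S \<subseteq> S'}"
  show "\<exists>U \<in> {S' \<in> Den_l. S \<subseteq> S'}. \<forall>X\<in>D. X \<subseteq> U"
  proof (cases "D = {}")
    case True
    then show ?thesis using assms by blast
  next
    case False
    have "\<Union>D \<in> Den_l"
      using D False by (intro Den_l_Union_chain) (auto simp: chains_def)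
    moreover have "S \<subseteq> \<Union>D"
      using D False by (auto simp: chains_def)
    ultimately show ?thesis by blast
  qed
qed

lemma singleton_one_in_Den_l: "{1} \<in> Den_l"
  by (auto simp: Den_l_def left_denominator_set_def left_ore_set_def mult_closed_def
      intro: exI[of _ r for r])

theorem lemma3p7:
  shows "(\<forall>S \<in> (Den_l :: 'a::ring_1 set set).
            \<exists>M \<in> {S' \<in> Den_l. S \<subseteq> S'}.
              \<forall>T \<in> {S' \<in> Den_l. S \<subseteq> S'}. M \<subseteq> T \<longrightarrow> T = M)
         \<and> (maxDen_l :: 'a set set) \<noteq> {}"
proof
  show "\<forall>S \<in> (Den_l :: 'a::ring_1 set set).
          \<exists>M \<in> {S' \<in> Den_l. S \<subseteq> S'}.
            \<forall>T \<in> {S' \<in> Den_l. S \<subseteq> S'}. M \<subseteq> T \<longrightarrow> T = M"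
    using ex_maximal_Den_l_above by blast
  obtain M :: "'a set" where "M \<in> Den_l" "\<forall>T \<in> Den_l. {1} \<subseteq> T \<longrightarrow> M \<subseteq> T \<longrightarrow> T = M"
    and "{1} \<subseteq> M"
    using ex_maximal_Den_l_above[OF singleton_one_in_Den_l] by auto
  then have "M \<in> maxDen_l"
    unfolding maxDen_l_def by auto
  then show "(maxDen_l :: 'a set set) \<noteq> {}" by blast
qed

end
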